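(* For any $S\ge1$, $Q\ge0$ and $x\in\mathbb{R}$, $$\psi(x,S,Q)<S|x|\big[2\ln(1+2x^2)+3Q+3S\big].$$
   Context: For $\theta\in\mathbb{R}$, $S>0$, $Q\ge0$: $\psi^*(\theta,S,Q)=\exp\big(\max_{\beta\in[-1/2,1/2]}(\theta\beta-\beta^2S^2)-Q\big)$, and $\psi(x,S,Q)=\sup_{\theta\in\mathbb{R}}(\theta x-\psi^*(\theta,S,Q))$. *)

theory Defs
  imports "HOL-Analysis.Analysis"
begin

definition psi_star :: "real \<Rightarrow> real \<Rightarrow> real \<Rightarrow> real" where
  "psi_star \<theta> S Q = exp ((SUP \<beta>\<in>{-1/2..1/2::real}. \<theta> * \<beta> - \<beta>^2 * S^2) - Q)"

definition psi :: "real \<Rightarrow> real \<Rightarrow> real \<Rightarrow> real" where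
  "psi x S Q = (SUP \<theta>\<in>(UNIV::real set). \<theta> * x - psi_star \<theta> S Q)"

end

theory Submission
  imports Defs
begin

text \<open>Testing the supremum defining \<open>psi_star\<close> at a single \<open>\<beta>\<close> bounds \<open>psi_star\<close> below by an
  exponential of \<open>\<theta>\<close>, so \<open>psi\<close> is bounded by the Legendre transform of that exponential. Choosing
  \<open>\<beta> = sgn x / (2 S)\<close> gives \<open>psi x S Q \<le> 2 S \<bar>x\<bar> (ln (2 S \<bar>x\<bar>) + Q - 3/4)\<close>, and
  \<open>ln 2 < 1\<close>, \<open>ln S \<le> S - 1\<close>, \<open>\<bar>x\<bar> < 1 + 2 x\<^sup>2\<close> finish the estimate. At \<open>x = 0\<close>, \<open>psi\<close> is negative.\<close>

lemma exp_le_psi_star: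
  fixes \<beta> \<theta> S Q :: real
  assumes "\<beta> \<in> {-1/2..1/2}"
  shows "exp (\<theta> * \<beta> - \<beta>^2 * S^2 - Q) \<le> psi_star \<theta> S Q"
proof -
  have "bdd_above ((\<lambda>\<beta>. \<theta> * \<beta> - \<beta>^2 * S^2) ` {-1/2..1/2::real})"
  proof (rule bdd_aboveI2[where M = "\<bar>\<theta>\<bar>"])
    fix y :: real
    assume "y \<in> {-1/2..1/2}"
    then have "\<bar>y\<bar> \<le> 1" by auto
    then have "\<bar>\<theta> * y\<bar> \<le> \<bar>\<theta>\<bar>" by (simp add: abs_mult mult_left_le)
    then show "\<theta> * y - y^2 * S^2 \<le> \<bar>\<theta>\<bar>" by (smt (verit) zero_le_mult_iff zero_le_power2)
  qed
  then have "\<theta> * \<beta> - \<beta>^2 * S^2 \<le> (SUP \<beta>\<in>{-1/2..1/2::real}. \<theta> * \<beta> - \<beta>^2 * S^2)"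
    using assms by (rule cSUP_upper2) simp
  then show ?thesis unfolding psi_star_def by simp
qed

lemma fenchel_young_exp:
  fixes A t :: real
  assumes "A > 0"
  shows "t * A \<le> exp t + A * ln A - A"
proof -
  have "1 + (t - ln A) \<le> exp (t - ln A)" by (rule exp_ge_add_one_self)
  also have "exp (t - ln A) = exp t / A" using assms by (simp add: exp_diff)
  finally show ?thesis using assms by (simp add: field_simps)
qed

lemma psi_le_legendre_exp:
  fixes x \<beta> S Q :: real
  assumes "\<beta> \<in> {-1/2..1/2}" and "x / \<beta> > 0"
  shows "psi x S Q \<le> x / \<beta> * (ln (x / \<beta>) + \<beta>^2 * S^2 + Q - 1)"
  unfolding psi_def
proof (rule cSUP_least)
  fix \<theta> :: real
  define A where "A = x / \<beta>"
  define c where "c = \<beta>^2 * S^2 + Q"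
  have "\<beta> \<noteq> 0" using assms(2) by auto
  then have "\<theta> * x = (\<theta> * \<beta> - c) * A + c * A" by (simp add: A_def field_simps)
  also have "\<dots> \<le> exp (\<theta> * \<beta> - c) + A * ln A - A + c * A"
    using fenchel_young_exp[of A "\<theta> * \<beta> - c"] assms(2) by (simp add: A_def)
  also have "exp (\<theta> * \<beta> - c) \<le> psi_star \<theta> S Q"
    using exp_le_psi_star[OF assms(1)] by (simp add: c_def diff_diff_eq)
  finally show "\<theta> * x - psi_star \<theta> S Q \<le> x / \<beta> * (ln (x / \<beta>) + \<beta>^2 * S^2 + Q - 1)"
    by (simp add: A_def c_def algebra_simps)
qed simp

lemma psi_zero_neg:
  fixes S Q :: real
  shows "psi 0 S Q < 0"
proof -
  have "psi 0 S Q \<le> - exp (- Q)"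
    unfolding psi_def
  proof (rule cSUP_least)
    fix \<theta> :: real
    show "\<theta> * 0 - psi_star \<theta> S Q \<le> - exp (- Q)"
      using exp_le_psi_star[of 0 \<theta> S Q] by simp
  qed simp
  then show ?thesis by (smt (verit) exp_gt_zero)
qed

lemma abs_less_one_plus_two_sq:
  fixes x :: real
  shows "\<bar>x\<bar> < 1 + 2 * x^2"
proof -
  have "0 \<le> (\<bar>x\<bar> - 1)^2" by simp
  then show ?thesis by (simp add: power2_diff) (smt (verit) zero_le_power2)
qed

theorem lemma12:
  fixes x S Q :: real
  assumes "S \<ge> 1" and "Q \<ge> 0"
  shows "psi x S Q < S * \<bar>x\<bar> * (2 * ln (1 + 2 * x^2) + 3 * Q + 3 * S)"
proof (cases "x = 0")
  case True
  then show ?thesis using psi_zero_neg by simp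
next
  case False
  define \<beta> where "\<beta> = sgn x / (2 * S)"
  have ratio: "x / \<beta> = 2 * S * \<bar>x\<bar>" and square: "\<beta>^2 * S^2 = 1/4"
    and \<beta>_range: "\<beta> \<in> {-1/2..1/2}"
    using assms(1) False by (auto simp: \<beta>_def sgn_if power2_eq_square field_simps)
  have "psi x S Q \<le> 2 * S * \<bar>x\<bar> * (ln (2 * S * \<bar>x\<bar>) + 1/4 + Q - 1)"
    using psi_le_legendre_exp[OF \<beta>_range, of x S Q] assms(1) False
    unfolding ratio square by simp
  also have "\<dots> = 2 * S * \<bar>x\<bar> * (ln 2 + ln S + ln \<bar>x\<bar> + Q - 3/4)"
    using assms(1) False by (simp add: ln_mult)
  also have "\<dots> < S * \<bar>x\<bar> * (2 * ln (1 + 2 * x^2) + 3 * Q + 3 * S)"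
  proof -
    have "ln S \<le> S - 1" using assms(1) by (intro ln_le_minus_one) simp
    moreover have "ln \<bar>x\<bar> < ln (1 + 2 * x^2)"
      using False abs_less_one_plus_two_sq[of x] by simp
    ultimately have "2 * (ln 2 + ln S + ln \<bar>x\<bar> + Q - 3/4) < 2 * ln (1 + 2 * x^2) + 3 * Q + 3 * S"
      using ln_2_less_1 assms by (simp add: algebra_simps)
    then show ?thesis using assms(1) False by simp
  qed
  finally show ?thesis .
qed

end
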